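(* Let $M=\langle S,A,P,R,s_\iota,\gamma\rangle$ be an MDP, $s^*_1,s^*_2\in S$, let $\mathcal{M}$ be the bisimulation metric RMDP constructed from $M$ and $s^*_1,s^*_2$, and let $d^*$ be the bisimulation metric of $M$ (see context). Then the optimal robust value function of $\mathcal{M}$ coincides with $d^*$, i.e. $\underline{V}^*_{\mathcal{M}}=d^*$, and in particular $\underline{V}^*_{\mathcal{M}}(s^*_1,s^*_2)=d^*(s^*_1,s^*_2)$.
   Context: An MDP $M=\langle S,A,P,R,s_\iota,\gamma\rangle$ has finite states $S$, finite actions $A$, transition function $P\colon S\times A\to\mathcal{D}(S)$, rewards $R\colon S\times A\to\mathbb{R}$, initial state $s_\iota$, discount $\gamma\in(0,1)$. A pseudometric on $S$ is $d\colon S\times S\to[0,\infty)$ with $d(x,x)=0$, symmetry and the triangle inequality; $\mathfrak{M}_S$ is the set of pseudometrics on $S$, ordered pointwise. For distributions $\mu,\nu$ on $S$, the set of couplings $\Lambda_{\mu,\nu}$ consists of $\vec\lambda\in\mathbb{R}_{\ge0}^{S\times S}$ with $\sum_{t'}\vec\lambda(t,t')=\mu(t)$, $\sum_t\vec\lambda(t,t')=\nu(t')$; the Kantorovich distance w.r.t. $d$ is $\mathfrak{D}_K(d)(\mu,\nu)=\min_{\vec\lambda\in\Lambda_{\mu,\nu}}\sum_{t,t'}\vec\lambda(t,t')d(t,t')$. Define $\mathfrak{F}_K\colon\mathfrak{M}_S\to\mathfrak{M}_S$ by $\mathfrak{F}_K(d)(s_1,s_2)=\max_{a\in A}(1-\gamma)|R(s_1,a)-R(s_2,a)|+\gamma\,\mathfrak{D}_K(d)(P(s_1,a),P(s_2,a))$;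 the bisimulation metric $d^*$ is the least fixed point of $\mathfrak{F}_K$. The bisimulation metric RMDP is $\mathcal{M}=\langle S\times S,A,\mathcal{U},\mathcal{R},\langle s^*_1,s^*_2\rangle,\gamma\rangle$, an $(s,a)$-rectangular RMDP with state space $S\times S$, uncertainty set $\mathcal{U}=\prod_{((s,s'),a)}\mathcal{U}_{((s,s'),a)}$ with $\mathcal{U}_{((s,s'),a)}=\Lambda_{P(s,a),P(s',a)}$ (a coupling is used as the distribution over successor pairs $(t,t')$), and reward $\mathcal{R}(\langle s,s'\rangle,a)=(1-\gamma)|R(s,a)-R(s',a)|$. For such an RMDP, the robust value of a policy $\pi$ from state $q$ is $\underline{V}^\pi(q)=\inf_{\vec u\in\mathcal{U}}\mathbb{E}_{\pi,P_{\vec u}}[\sum_{t\ge0}\gamma^t\mathcal{R}(q_t,a_t)\mid q_0=q]$ and $\underline{V}^*_{\mathcal{M}}(q)=\sup_\pi\underline{V}^\pi(q)$ over all policies. *)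

theory Defs
  imports "HOL-Probability.Probability"
begin

definition is_pseudometric :: "('s \<Rightarrow> 's \<Rightarrow> real) \<Rightarrow> bool" where
  "is_pseudometric d \<longleftrightarrow>
     (\<forall>x y. 0 \<le> d x y) \<and> (\<forall>x. d x x = 0) \<and> (\<forall>x y. d x y = d y x) \<and>
     (\<forall>x y z. d x z \<le> d x y + d y z)"

definition couplings :: "'s pmf \<Rightarrow> 's pmf \<Rightarrow> ('s \<times> 's) pmf set" where
  "couplings \<mu> \<nu> = {c. map_pmf fst c = \<mu> \<and> map_pmf snd c = \<nu>}"

definition kantorovich :: "('s \<Rightarrow> 's \<Rightarrow> real) \<Rightarrow> 's pmf \<Rightarrow> 's pmf \<Rightarrow> real" where
  "kantorovich d \<mu> \<nu> =
     (INF c \<in> couplings \<mu> \<nu>. measure_pmf.expectation c (\<lambda>(t, t'). d t t'))"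

definition FK :: "('s \<Rightarrow> 'a::finite \<Rightarrow> 's pmf) \<Rightarrow> ('s \<Rightarrow> 'a \<Rightarrow> real) \<Rightarrow> real
                  \<Rightarrow> ('s \<Rightarrow> 's \<Rightarrow> real) \<Rightarrow> ('s \<Rightarrow> 's \<Rightarrow> real)" where
  "FK P R \<gamma> d = (\<lambda>s1 s2. MAX a \<in> (UNIV :: 'a set).
       (1 - \<gamma>) * \<bar>R s1 a - R s2 a\<bar> + \<gamma> * kantorovich d (P s1 a) (P s2 a))"

definition bisim_metric :: "('s \<Rightarrow> 'a::finite \<Rightarrow> 's pmf) \<Rightarrow> ('s \<Rightarrow> 'a \<Rightarrow> real) \<Rightarrow> real
                            \<Rightarrow> ('s \<Rightarrow> 's \<Rightarrow> real)" where
  "bisim_metric P R \<gamma> = (THE d. is_pseudometric d \<and> FK P R \<gamma> d = d \<and>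
      (\<forall>d'. is_pseudometric d' \<and> FK P R \<gamma> d' = d' \<longrightarrow> (\<forall>x y. d x y \<le> d' x y)))"

text \<open>A history is the list of past (state, action) pairs together with the current state.
  A choice of the adversary K fixes a transition kernel.\<close>

type_synonym ('q, 'a) hist = "('q \<times> 'a) list \<times> 'q"

fun hist_dist :: "(('q, 'a) hist \<Rightarrow> 'a pmf) \<Rightarrow> ('q \<Rightarrow> 'a \<Rightarrow> 'q pmf) \<Rightarrow> 'q \<Rightarrow> nat
                   \<Rightarrow> ('q, 'a) hist pmf" where
  "hist_dist \<pi> K q 0 = return_pmf ([], q)"
| "hist_dist \<pi> K q (Suc n) = bind_pmf (hist_dist \<pi> K q n) (\<lambda>(h, x).
      bind_pmf (\<pi> (h, x)) (\<lambda>a. map_pmf (\<lambda>y. (h @ [(x, a)], y)) (K x a)))"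

definition disc_value :: "(('q, 'a) hist \<Rightarrow> 'a pmf) \<Rightarrow> ('q \<Rightarrow> 'a \<Rightarrow> 'q pmf)
                          \<Rightarrow> ('q \<Rightarrow> 'a \<Rightarrow> real) \<Rightarrow> real \<Rightarrow> 'q \<Rightarrow> real" where
  "disc_value \<pi> K rew \<gamma> q = (\<Sum>n. \<gamma> ^ n * measure_pmf.expectation (hist_dist \<pi> K q n)
      (\<lambda>(h, x). measure_pmf.expectation (\<pi> (h, x)) (\<lambda>a. rew x a)))"

definition robust_value :: "(('q, 'a) hist \<Rightarrow> 'a pmf) \<Rightarrow> ('q \<Rightarrow> 'a \<Rightarrow> 'q pmf) set
                            \<Rightarrow> ('q \<Rightarrow> 'a \<Rightarrow> real) \<Rightarrow> real \<Rightarrow> 'q \<Rightarrow> real" where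
  "robust_value \<pi> U rew \<gamma> q = (INF K \<in> U. disc_value \<pi> K rew \<gamma> q)"

definition robust_opt_value :: "('q \<Rightarrow> 'a \<Rightarrow> 'q pmf) set \<Rightarrow> ('q \<Rightarrow> 'a \<Rightarrow> real) \<Rightarrow> real
                                \<Rightarrow> 'q \<Rightarrow> real" where
  "robust_opt_value U rew \<gamma> q = (SUP \<pi> \<in> UNIV. robust_value \<pi> U rew \<gamma> q)"

definition bisim_unc :: "('s \<Rightarrow> 'a \<Rightarrow> 's pmf) \<Rightarrow> (('s \<times> 's) \<Rightarrow> 'a \<Rightarrow> ('s \<times> 's) pmf) set" where
  "bisim_unc P = {K. \<forall>s s' a. K (s, s') a \<in> couplings (P s a) (P s' a)}"

definition bisim_reward :: "('s \<Rightarrow> 'a \<Rightarrow> real) \<Rightarrow> real \<Rightarrow> ('s \<times> 's) \<Rightarrow> 'a \<Rightarrow> real" where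
  "bisim_reward R \<gamma> q a = (1 - \<gamma>) * \<bar>R (fst q) a - R (snd q) a\<bar>"

end

theory Submission
  imports Defs
begin

text \<open>
  The operator FK is monotone, a \<gamma>-contraction for the sup distance (the Kantorovich
  distance moves by at most e when the cost moves by at most e), and it preserves
  pseudometrics, the triangle inequality coming from gluing two couplings along their common
  marginal. So the Kleene iteration from the zero pseudometric converges to a pseudometric
  fixed point, which is the unique fixed point and hence the bisimulation metric d.

  On the RMDP, d solves the robust Bellman equation. Any coupling costs at least the
  Kantorovich distance, so the stationary policy playing an action that attains the maximum in
  FK collects at least d against every adversary. Conversely, against any policy the adversary
  playing nearly optimal couplings keeps the value below d plus an arbitrarily small slack.
  Both comparisons come from telescoping the expected discounted reward against a sub- or
  supersolution of the Bellman inequality.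
\<close>

section \<open>Couplings and the Kantorovich distance\<close>

lemma integrable_measure_pmf_finite_type [simp]:
  fixes f :: "'a::finite \<Rightarrow> real"
  shows "integrable (measure_pmf p) f"
  by (rule integrable_measure_pmf_finite) simp

lemma expectation_bind_pmf_finite:
  fixes h :: "'b \<Rightarrow> real"
  assumes "finite (set_pmf p)" "\<And>x. x \<in> set_pmf p \<Longrightarrow> finite (set_pmf (f x))"
  shows "measure_pmf.expectation (bind_pmf p f) h =
         measure_pmf.expectation p (\<lambda>x. measure_pmf.expectation (f x) h)"
  using assms
  by (simp add: pmf_expectation_bind[of "set_pmf p"] integral_measure_pmf_real[of "set_pmf p"]
      mult.commute)

lemma pair_pmf_in_couplings: "pair_pmf \<mu> \<nu> \<in> couplings \<mu> \<nu>"
  by (simp add: couplings_def map_fst_pair_pmf map_snd_pair_pmf)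

lemma map_swap_in_couplings: "c \<in> couplings \<mu> \<nu> \<Longrightarrow> map_pmf prod.swap c \<in> couplings \<nu> \<mu>"
  by (simp add: couplings_def pmf.map_comp o_def)

lemma couplings_glue:
  assumes c1: "c1 \<in> couplings \<mu> \<nu>" and c2: "c2 \<in> couplings \<nu> \<xi>"
  obtains t where "map_pmf (\<lambda>(x, y, z). (x, y)) t = c1" and "map_pmf (\<lambda>(x, y, z). (y, z)) t = c2"
proof
  define t where "t = bind_pmf c1 (\<lambda>xy. map_pmf (Pair (fst xy)) (cond_pmf c2 {yz. fst yz = snd xy}))"
  have \<nu>: "\<nu> = map_pmf snd c1" "\<nu> = map_pmf fst c2"
    using c1 c2 by (auto simp: couplings_def)
  have fiber_nonempty: "set_pmf c2 \<inter> {yz. fst yz = y} \<noteq> {}" if "y \<in> set_pmf \<nu>" for y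
    using that by (force simp: \<nu>(2))
  have "map_pmf (\<lambda>(x, y, z). (x, y)) t = bind_pmf c1 return_pmf"
    unfolding t_def map_bind_pmf
  proof (intro bind_pmf_cong refl)
    fix xy assume "xy \<in> set_pmf c1"
    then have "set_pmf c2 \<inter> {yz. fst yz = snd xy} \<noteq> {}"
      by (intro fiber_nonempty) (force simp: \<nu>(1))
    then have "map_pmf (\<lambda>(x, y, z). (x, y)) (map_pmf (Pair (fst xy)) (cond_pmf c2 {yz. fst yz = snd xy}))
        = map_pmf (\<lambda>_. xy) (cond_pmf c2 {yz. fst yz = snd xy})"
      unfolding pmf.map_comp by (intro map_pmf_cong) auto
    then show "map_pmf (\<lambda>(x, y, z). (x, y)) (map_pmf (Pair (fst xy)) (cond_pmf c2 {yz. fst yz = snd xy}))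
        = return_pmf xy"
      by simp
  qed
  then show "map_pmf (\<lambda>(x, y, z). (x, y)) t = c1"
    by (simp add: bind_return_pmf')
  have "map_pmf (\<lambda>(x, y, z). (y, z)) t = bind_pmf \<nu> (\<lambda>y. cond_pmf c2 {yz. fst yz = y})"
    unfolding t_def map_bind_pmf \<nu>(1) bind_map_pmf
    by (intro bind_pmf_cong) (auto simp: pmf.map_comp o_def split_beta intro!: map_pmf_idI)
  also have "\<dots> = c2"
    unfolding \<nu>(2) by (rule bind_cond_pmf_cancel) (auto simp: vimage_def eq_commute)
  finally show "map_pmf (\<lambda>(x, y, z). (y, z)) t = c2" .
qed

lemma bdd_below_expectation_finite:
  fixes f :: "'a::finite \<Rightarrow> real"
  shows "bdd_below ((\<lambda>c. measure_pmf.expectation c f) ` C)"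
  by (rule bdd_belowI[of _ "Min (range f)"])
     (auto intro!: measure_pmf.integral_ge_const AE_pmfI)

lemma kantorovich_le_expectation:
  fixes d :: "'s::finite \<Rightarrow> 's \<Rightarrow> real"
  assumes "c \<in> couplings \<mu> \<nu>"
  shows "kantorovich d \<mu> \<nu> \<le> measure_pmf.expectation c (case_prod d)"
  unfolding kantorovich_def by (rule cINF_lower[OF bdd_below_expectation_finite assms])

lemma kantorovich_approx:
  fixes d :: "'s::finite \<Rightarrow> 's \<Rightarrow> real"
  assumes "0 < e"
  shows "\<exists>c\<in>couplings \<mu> \<nu>. measure_pmf.expectation c (case_prod d) < kantorovich d \<mu> \<nu> + e"
  using assms pair_pmf_in_couplings
  unfolding kantorovich_def by (subst cINF_less_iff[symmetric]) (auto intro: bdd_below_expectation_finite)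

lemma kantorovich_nonneg:
  fixes d :: "'s::finite \<Rightarrow> 's \<Rightarrow> real"
  assumes "\<And>x y. 0 \<le> d x y"
  shows "0 \<le> kantorovich d \<mu> \<nu>"
  unfolding kantorovich_def using pair_pmf_in_couplings
  by (intro cINF_greatest) (auto intro!: integral_nonneg_AE AE_pmfI simp: assms)

lemma kantorovich_le_add:
  fixes d d' :: "'s::finite \<Rightarrow> 's \<Rightarrow> real"
  assumes "\<And>x y. d x y \<le> d' x y + e"
  shows "kantorovich d \<mu> \<nu> \<le> kantorovich d' \<mu> \<nu> + e"
proof -
  have "kantorovich d \<mu> \<nu> - e \<le> measure_pmf.expectation c (case_prod d')"
    if c: "c \<in> couplings \<mu> \<nu>" for c
  proof -
    have "kantorovich d \<mu> \<nu> \<le> measure_pmf.expectation c (case_prod d)"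
      by (rule kantorovich_le_expectation[OF c])
    also have "\<dots> \<le> measure_pmf.expectation c (\<lambda>p. case_prod d' p + e)"
      by (intro integral_mono) (auto simp: assms)
    finally show ?thesis by simp
  qed
  then have "kantorovich d \<mu> \<nu> - e \<le> kantorovich d' \<mu> \<nu>"
    unfolding kantorovich_def[of d'] using pair_pmf_in_couplings by (intro cINF_greatest) auto
  then show ?thesis by simp
qed

lemma kantorovich_self:
  fixes d :: "'s::finite \<Rightarrow> 's \<Rightarrow> real"
  assumes "\<And>x y. 0 \<le> d x y" and "\<And>x. d x x = 0"
  shows "kantorovich d \<mu> \<mu> = 0"
proof -
  have "map_pmf (\<lambda>x. (x, x)) \<mu> \<in> couplings \<mu> \<mu>"
    by (simp add: couplings_def pmf.map_comp o_def)
  from kantorovich_le_expectation[OF this, of d] have "kantorovich d \<mu> \<mu> \<le> 0"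
    by (simp add: assms(2))
  moreover have "0 \<le> kantorovich d \<mu> \<mu>"
    by (rule kantorovich_nonneg) (rule assms(1))
  ultimately show ?thesis by simp
qed

lemma kantorovich_commute:
  fixes d :: "'s::finite \<Rightarrow> 's \<Rightarrow> real"
  assumes "\<And>x y. d x y = d y x"
  shows "kantorovich d \<mu> \<nu> = kantorovich d \<nu> \<mu>"
proof -
  have "kantorovich d \<mu> \<nu> \<le> kantorovich d \<nu> \<mu>" for \<mu> \<nu>
    unfolding kantorovich_def[of d \<nu>]
  proof (rule cINF_greatest)
    fix c assume "c \<in> couplings \<nu> \<mu>"
    from kantorovich_le_expectation[OF map_swap_in_couplings[OF this], of d]
    show "kantorovich d \<mu> \<nu> \<le> measure_pmf.expectation c (case_prod d)"
      by (simp add: case_prod_unfold assms[of "snd _" "fst _"])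
  qed (use pair_pmf_in_couplings in blast)
  then show ?thesis
    by (meson antisym)
qed

lemma kantorovich_triangle:
  fixes d :: "'s::finite \<Rightarrow> 's \<Rightarrow> real"
  assumes "\<And>x y z. d x z \<le> d x y + d y z"
  shows "kantorovich d \<mu> \<xi> \<le> kantorovich d \<mu> \<nu> + kantorovich d \<nu> \<xi>"
proof (rule field_le_epsilon)
  fix e :: real assume "0 < e"
  then obtain c1 c2 where c1: "c1 \<in> couplings \<mu> \<nu>" and c2: "c2 \<in> couplings \<nu> \<xi>"
    and c1_cost: "measure_pmf.expectation c1 (case_prod d) < kantorovich d \<mu> \<nu> + e / 2"
    and c2_cost: "measure_pmf.expectation c2 (case_prod d) < kantorovich d \<nu> \<xi> + e / 2"
    using kantorovich_approx[of "e / 2"] by (meson half_gt_zero)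
  obtain t where t12: "map_pmf (\<lambda>(x, y, z). (x, y)) t = c1" and t23: "map_pmf (\<lambda>(x, y, z). (y, z)) t = c2"
    using couplings_glue[OF c1 c2] .
  have "map_pmf (\<lambda>(x, y, z). (x, z)) t \<in> couplings \<mu> \<xi>"
    using c1 c2 unfolding couplings_def t12[symmetric] t23[symmetric]
    by (simp add: pmf.map_comp o_def split_beta)
  from kantorovich_le_expectation[OF this, of d]
  have "kantorovich d \<mu> \<xi> \<le> measure_pmf.expectation t (\<lambda>(x, y, z). d x z)"
    by (simp add: case_prod_unfold)
  also have "\<dots> \<le> measure_pmf.expectation t (\<lambda>(x, y, z). d x y + d y z)"
    by (intro integral_mono_AE integrable_measure_pmf_finite) (auto simp: assms)
  also have "\<dots> = measure_pmf.expectation c1 (case_prod d) + measure_pmf.expectation c2 (case_prod d)"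
    unfolding t12[symmetric] t23[symmetric]
    by (simp add: case_prod_unfold integral_add)
  finally show "kantorovich d \<mu> \<xi> \<le> kantorovich d \<mu> \<nu> + kantorovich d \<nu> \<xi> + e"
    using c1_cost c2_cost by linarith
qed


section \<open>The bisimulation operator and its fixed point\<close>

lemma FK_ge:
  "(1 - \<gamma>) * \<bar>R s a - R s' a\<bar> + \<gamma> * kantorovich d (P s a) (P s' a) \<le> FK P R \<gamma> d s s'"
  unfolding FK_def by (rule Max_ge) auto

lemma FK_attained:
  "\<exists>a. FK P R \<gamma> d s s' = (1 - \<gamma>) * \<bar>R s a - R s' a\<bar> + \<gamma> * kantorovich d (P s a) (P s' a)"
proof -
  have "FK P R \<gamma> d s s'
      \<in> range (\<lambda>a. (1 - \<gamma>) * \<bar>R s a - R s' a\<bar> + \<gamma> * kantorovich d (P s a) (P s' a))"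
    unfolding FK_def by (rule Max_in) auto
  then show ?thesis by auto
qed

lemma FK_le_add:
  fixes d d' :: "'s::finite \<Rightarrow> 's \<Rightarrow> real"
  assumes "0 \<le> \<gamma>" and "\<And>x y. d x y \<le> d' x y + e"
  shows "FK P R \<gamma> d s s' \<le> FK P R \<gamma> d' s s' + \<gamma> * e"
proof -
  obtain a where "FK P R \<gamma> d s s' = (1 - \<gamma>) * \<bar>R s a - R s' a\<bar> + \<gamma> * kantorovich d (P s a) (P s' a)"
    using FK_attained[of P R \<gamma> d s s'] by blast
  also have "\<dots> \<le> (1 - \<gamma>) * \<bar>R s a - R s' a\<bar> + \<gamma> * kantorovich d' (P s a) (P s' a) + \<gamma> * e"
    using mult_left_mono[OF kantorovich_le_add[of d d' e, OF assms(2)] assms(1)] by (simp add: algebra_simps)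
  also have "\<dots> \<le> FK P R \<gamma> d' s s' + \<gamma> * e"
    using FK_ge by simp
  finally show ?thesis .
qed

lemma FK_mono:
  fixes d d' :: "'s::finite \<Rightarrow> 's \<Rightarrow> real"
  assumes "0 \<le> \<gamma>" and "\<And>x y. d x y \<le> d' x y"
  shows "FK P R \<gamma> d s s' \<le> FK P R \<gamma> d' s s'"
  using FK_le_add[of \<gamma> d d' 0] assms by simp

lemma is_pseudometric_FK:
  fixes d :: "'s::finite \<Rightarrow> 's \<Rightarrow> real"
  assumes "0 \<le> \<gamma>" "\<gamma> \<le> 1" and d: "is_pseudometric d"
  shows "is_pseudometric (FK P R \<gamma> d)"
proof -
  have nonneg: "\<And>x y. 0 \<le> d x y" and diag: "\<And>x. d x x = 0" and sym: "\<And>x y. d x y = d y x"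
    and tri: "\<And>x y z. d x z \<le> d x y + d y z"
    using d by (auto simp: is_pseudometric_def)
  have "0 \<le> FK P R \<gamma> d x y" for x y
  proof -
    have "0 \<le> (1 - \<gamma>) * \<bar>R x a - R y a\<bar> + \<gamma> * kantorovich d (P x a) (P y a)" for a
      using assms(1,2) kantorovich_nonneg[of d, OF nonneg] by simp
    then show ?thesis using FK_ge by (rule order_trans)
  qed
  moreover have "FK P R \<gamma> d x x = 0" for x
    by (simp add: FK_def kantorovich_self[of d, OF nonneg diag])
  moreover have "FK P R \<gamma> d x y = FK P R \<gamma> d y x" for x y
    by (simp add: FK_def kantorovich_commute[of d, OF sym] abs_minus_commute)
  moreover have "FK P R \<gamma> d x z \<le> FK P R \<gamma> d x y + FK P R \<gamma> d y z" for x y z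
  proof -
    obtain a where "FK P R \<gamma> d x z = (1 - \<gamma>) * \<bar>R x a - R z a\<bar> + \<gamma> * kantorovich d (P x a) (P z a)"
      using FK_attained[of P R \<gamma> d x z] by blast
    also have "\<dots> \<le> ((1 - \<gamma>) * \<bar>R x a - R y a\<bar> + \<gamma> * kantorovich d (P x a) (P y a))
                   + ((1 - \<gamma>) * \<bar>R y a - R z a\<bar> + \<gamma> * kantorovich d (P y a) (P z a))"
      using mult_left_mono[OF kantorovich_triangle[of d "P x a" "P z a" "P y a", OF tri] assms(1)]
        mult_left_mono[OF abs_triangle_ineq[of "R x a - R y a" "R y a - R z a"], of "1 - \<gamma>"] assms(2)
      by (simp add: algebra_simps)
    also have "\<dots> \<le> FK P R \<gamma> d x y + FK P R \<gamma> d y z"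
      by (intro add_mono FK_ge)
    finally show ?thesis .
  qed
  ultimately show ?thesis
    unfolding is_pseudometric_def by blast
qed

lemma FK_fixpoint_unique:
  fixes d d' :: "'s::finite \<Rightarrow> 's \<Rightarrow> real"
  assumes "0 \<le> \<gamma>" "\<gamma> < 1" and d: "FK P R \<gamma> d = d" and d': "FK P R \<gamma> d' = d'"
  shows "d = d'"
proof -
  define e where "e = Max (range (\<lambda>(x, y). \<bar>d x y - d' x y\<bar>))"
  have e: "\<bar>d x y - d' x y\<bar> \<le> e" for x y
    unfolding e_def by (rule Max_ge) (auto intro: image_eqI[of _ _ "(x, y)"])
  have le: "d x y \<le> d' x y + e" "d' x y \<le> d x y + e" for x y
    using e[of x y] by (auto simp: abs_le_iff)
  have "FK P R \<gamma> d x y \<le> FK P R \<gamma> d' x y + \<gamma> * e"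
    and "FK P R \<gamma> d' x y \<le> FK P R \<gamma> d x y + \<gamma> * e" for x y
    by (rule FK_le_add[OF assms(1)], rule le)+
  then have contracted: "\<bar>d x y - d' x y\<bar> \<le> \<gamma> * e" for x y
    unfolding d d' abs_le_iff by (smt (verit))
  have "Max (range (\<lambda>(x, y). \<bar>d x y - d' x y\<bar>)) \<le> \<gamma> * e"
    by (rule Max.boundedI) (auto simp: contracted)
  then have "e \<le> 0"
    using assms(2) by (simp add: e_def[symmetric] mult_le_cancel_right1)
  then have "\<bar>d x y - d' x y\<bar> \<le> 0" for x y
    using e[of x y] by linarith
  then show ?thesis
    by (intro ext) simp
qed

lemma is_pseudometric_SUP:
  fixes f :: "nat \<Rightarrow> 's \<Rightarrow> 's \<Rightarrow> real"
  assumes pm: "\<And>n. is_pseudometric (f n)" and bdd: "\<And>x y. bdd_above (range (\<lambda>n. f n x y))"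
  shows "is_pseudometric (\<lambda>x y. SUP n. f n x y)"
proof -
  have nonneg: "0 \<le> f n x y" and diag: "f n x x = 0" and sym: "f n x y = f n y x"
    and tri: "f n x z \<le> f n x y + f n y z" for n x y z
    using pm[of n] unfolding is_pseudometric_def by blast+
  have upper: "f n x y \<le> (SUP n. f n x y)" for n x y
    by (rule cSUP_upper[OF UNIV_I bdd])
  have triangle: "(SUP n. f n x z) \<le> (SUP n. f n x y) + (SUP n. f n y z)" for x y z
    by (rule cSUP_least) (auto intro: order_trans[OF tri add_mono[OF upper upper]])
  have symmetric: "(SUP n. f n x y) = (SUP n. f n y x)" for x y
    by (simp only: sym[of _ x y])
  show ?thesis
    unfolding is_pseudometric_def
    by (intro conjI allI order_trans[OF nonneg upper] symmetric triangle) (simp add: diag)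
qed

definition FK_iter :: "('s \<Rightarrow> 'a::finite \<Rightarrow> 's pmf) \<Rightarrow> ('s \<Rightarrow> 'a \<Rightarrow> real) \<Rightarrow> real \<Rightarrow> nat
                       \<Rightarrow> ('s \<Rightarrow> 's \<Rightarrow> real)" where
  "FK_iter P R \<gamma> n = (FK P R \<gamma> ^^ n) (\<lambda>_ _. 0)"

lemma FK_iter_0 [simp]: "FK_iter P R \<gamma> 0 = (\<lambda>_ _. 0)"
  and FK_iter_Suc [simp]: "FK_iter P R \<gamma> (Suc n) = FK P R \<gamma> (FK_iter P R \<gamma> n)"
  by (simp_all add: FK_iter_def)

lemma is_pseudometric_FK_iter:
  fixes P :: "'s::finite \<Rightarrow> 'a::finite \<Rightarrow> 's pmf"
  assumes "0 \<le> \<gamma>" "\<gamma> \<le> 1"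
  shows "is_pseudometric (FK_iter P R \<gamma> n)"
proof (induction n)
  case 0
  then show ?case by (simp add: is_pseudometric_def)
next
  case (Suc n)
  then show ?case by (simp add: is_pseudometric_FK[OF assms])
qed

lemma FK_iter_mono:
  fixes P :: "'s::finite \<Rightarrow> 'a::finite \<Rightarrow> 's pmf"
  assumes "0 \<le> \<gamma>" "\<gamma> \<le> 1" and "m \<le> n"
  shows "FK_iter P R \<gamma> m x y \<le> FK_iter P R \<gamma> n x y"
proof -
  have "FK_iter P R \<gamma> n x y \<le> FK_iter P R \<gamma> (Suc n) x y" for n x y
  proof (induction n arbitrary: x y)
    case 0
    then show ?case
      using is_pseudometric_FK_iter[OF assms(1,2), of P R 1] by (simp add: is_pseudometric_def)
  next
    case (Suc n)
    then show ?case
      unfolding FK_iter_Suc[of P R \<gamma> "Suc n"] FK_iter_Suc[of P R \<gamma> n] by (rule FK_mono[OF assms(1)])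
  qed
  then show ?thesis
    using lift_Suc_mono_le[of "\<lambda>n. FK_iter P R \<gamma> n x y"] assms(3) by blast
qed

lemma FK_iter_le:
  fixes P :: "'s::finite \<Rightarrow> 'a::finite \<Rightarrow> 's pmf"
  assumes "0 \<le> \<gamma>" "0 \<le> C" and first: "\<And>x y. FK P R \<gamma> (\<lambda>_ _. 0) x y \<le> (1 - \<gamma>) * C"
  shows "FK_iter P R \<gamma> n x y \<le> C"
proof (induction n arbitrary: x y)
  case (Suc n)
  have "FK_iter P R \<gamma> (Suc n) x y \<le> FK P R \<gamma> (\<lambda>_ _. 0) x y + \<gamma> * C"
    unfolding FK_iter_Suc by (rule FK_le_add[OF assms(1)]) (simp add: Suc.IH)
  also have "\<dots> \<le> C"
    using first[of x y] by (simp add: algebra_simps)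
  finally show ?case .
qed (simp add: assms(2))

lemma FK_iter_tail:
  fixes P :: "'s::finite \<Rightarrow> 'a::finite \<Rightarrow> 's pmf"
  assumes "0 \<le> \<gamma>" and bound: "\<And>m x y. FK_iter P R \<gamma> m x y \<le> C"
  shows "FK_iter P R \<gamma> (n + m) x y \<le> FK_iter P R \<gamma> n x y + \<gamma> ^ n * C"
proof (induction n arbitrary: x y)
  case (Suc n)
  have "FK_iter P R \<gamma> (Suc n + m) x y \<le> FK_iter P R \<gamma> (Suc n) x y + \<gamma> * (\<gamma> ^ n * C)"
    unfolding add_Suc FK_iter_Suc by (rule FK_le_add[OF assms(1) Suc.IH])
  then show ?case by simp
qed (simp add: bound)

lemma FK_fixpoint_if_between_iterates:
  fixes P :: "'s::finite \<Rightarrow> 'a::finite \<Rightarrow> 's pmf"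
  assumes "0 \<le> \<gamma>" "\<gamma> < 1"
    and below: "\<And>n x y. FK_iter P R \<gamma> n x y \<le> L x y"
    and above: "\<And>n x y. L x y \<le> FK_iter P R \<gamma> n x y + \<gamma> ^ n * C"
  shows "FK P R \<gamma> L = L"
proof (intro ext antisym)
  have le_if: "a \<le> b" if "\<And>n. a \<le> b + \<gamma> ^ Suc n * C" for a b
  proof -
    have "(\<lambda>n. b + \<gamma> ^ Suc n * C) \<longlonglongrightarrow> b + 0 * C"
      using assms by (intro tendsto_add tendsto_mult_right tendsto_const LIMSEQ_Suc LIMSEQ_power_zero) auto
    then show ?thesis
      using that LIMSEQ_le_const[of "\<lambda>n. b + \<gamma> ^ Suc n * C" _ a] by auto
  qed
  fix x y
  show "FK P R \<gamma> L x y \<le> L x y"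
  proof (rule le_if)
    fix n
    have "FK P R \<gamma> L x y \<le> FK_iter P R \<gamma> (Suc n) x y + \<gamma> * (\<gamma> ^ n * C)"
      unfolding FK_iter_Suc by (rule FK_le_add[OF assms(1) above])
    then show "FK P R \<gamma> L x y \<le> L x y + \<gamma> ^ Suc n * C"
      using below[of "Suc n" x y] by simp
  qed
  show "L x y \<le> FK P R \<gamma> L x y"
  proof (rule le_if)
    fix n
    have "FK_iter P R \<gamma> (Suc n) x y \<le> FK P R \<gamma> L x y"
      unfolding FK_iter_Suc by (rule FK_mono[OF assms(1) below])
    then show "L x y \<le> FK P R \<gamma> L x y + \<gamma> ^ Suc n * C"
      using above[of x y "Suc n"] by linarith
  qed
qed

lemma FK_has_pseudometric_fixpoint:
  fixes P :: "'s::finite \<Rightarrow> 'a::finite \<Rightarrow> 's pmf"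
  assumes "0 \<le> \<gamma>" "\<gamma> < 1"
  obtains d where "is_pseudometric d" and "FK P R \<gamma> d = d"
proof
  let ?f = "FK_iter P R \<gamma>"
  have \<gamma>: "0 \<le> \<gamma>" "\<gamma> \<le> 1"
    using assms by auto
  define C where "C = Max (range (\<lambda>(x, y). FK P R \<gamma> (\<lambda>_ _. 0) x y)) / (1 - \<gamma>)"
  have "FK P R \<gamma> (\<lambda>_ _. 0) x y \<le> (1 - \<gamma>) * C" for x y
    unfolding C_def using assms(2) by (auto intro!: Max_ge image_eqI[of _ _ "(x, y)"])
  moreover have "0 \<le> C"
    using calculation[of undefined undefined] is_pseudometric_FK_iter[OF \<gamma>, of P R 1] assms(2)
    by (simp add: is_pseudometric_def zero_le_mult_iff)
  ultimately have bound: "?f n x y \<le> C" for n x y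
    by (rule FK_iter_le[OF assms(1), rotated])
  define L where "L x y = (SUP n. ?f n x y)" for x y
  have bdd: "bdd_above (range (\<lambda>n. ?f n x y))" for x y
    by (rule bdd_aboveI[of _ C]) (auto simp: bound)
  show "is_pseudometric L"
    unfolding L_def by (intro is_pseudometric_SUP bdd is_pseudometric_FK_iter[OF \<gamma>])
  show "FK P R \<gamma> L = L"
  proof (rule FK_fixpoint_if_between_iterates[OF assms])
    show "?f n x y \<le> L x y" for n x y
      unfolding L_def by (rule cSUP_upper[OF _ bdd]) simp
    show "L x y \<le> ?f n x y + \<gamma> ^ n * C" for n x y
      unfolding L_def
    proof (rule cSUP_least)
      fix m
      have "?f m x y \<le> ?f (n + m) x y"
        by (rule FK_iter_mono[OF \<gamma> le_add2])
      also have "\<dots> \<le> ?f n x y + \<gamma> ^ n * C"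
        by (rule FK_iter_tail[OF assms(1) bound])
      finally show "?f m x y \<le> ?f n x y + \<gamma> ^ n * C" .
    qed simp
  qed
qed

lemma bisim_metric_eqI:
  fixes P :: "'s::finite \<Rightarrow> 'a::finite \<Rightarrow> 's pmf"
  assumes "0 \<le> \<gamma>" "\<gamma> < 1" and "is_pseudometric d" and "FK P R \<gamma> d = d"
  shows "bisim_metric P R \<gamma> = d"
  unfolding bisim_metric_def
proof (rule the_equality)
  show "is_pseudometric d \<and> FK P R \<gamma> d = d \<and>
      (\<forall>d'. is_pseudometric d' \<and> FK P R \<gamma> d' = d' \<longrightarrow> (\<forall>x y. d x y \<le> d' x y))"
  proof (intro conjI allI impI assms(3,4))
    fix d' x y
    assume "is_pseudometric d' \<and> FK P R \<gamma> d' = d'"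
    then have "d' = d"
      by (intro FK_fixpoint_unique[OF assms(1,2) _ assms(4)]) (rule conjunct2)
    then show "d x y \<le> d' x y" by simp
  qed
next
  fix d'
  assume "is_pseudometric d' \<and> FK P R \<gamma> d' = d' \<and>
      (\<forall>d''. is_pseudometric d'' \<and> FK P R \<gamma> d'' = d'' \<longrightarrow> (\<forall>x y. d' x y \<le> d'' x y))"
  then show "d' = d"
    by (intro FK_fixpoint_unique[OF assms(1,2) _ assms(4)]) blast
qed


section \<open>Discounted values and Bellman inequalities\<close>

lemma finite_set_hist_dist:
  fixes \<pi> :: "('q::finite, 'a::finite) hist \<Rightarrow> 'a pmf"
  shows "finite (set_pmf (hist_dist \<pi> K q n))"
  by (induction n) (auto simp: set_bind_pmf split: prod.splits)

lemma integrable_hist_dist [simp]: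
  fixes \<pi> :: "('q::finite, 'a::finite) hist \<Rightarrow> 'a pmf" and f :: "('q, 'a) hist \<Rightarrow> real"
  shows "integrable (measure_pmf (hist_dist \<pi> K q n)) f"
  by (rule integrable_measure_pmf_finite[OF finite_set_hist_dist])

lemma expectation_hist_dist_Suc:
  fixes \<pi> :: "('q::finite, 'a::finite) hist \<Rightarrow> 'a pmf" and g :: "'q \<Rightarrow> real"
  shows "measure_pmf.expectation (hist_dist \<pi> K q (Suc n)) (\<lambda>(h, x). g x)
       = measure_pmf.expectation (hist_dist \<pi> K q n)
           (\<lambda>(h, x). measure_pmf.expectation (\<pi> (h, x)) (\<lambda>a. measure_pmf.expectation (K x a) g))"
proof -
  have "measure_pmf.expectation (hist_dist \<pi> K q (Suc n)) (\<lambda>(h, x). g x)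
      = measure_pmf.expectation (hist_dist \<pi> K q n) (\<lambda>(h, x). measure_pmf.expectation
          (bind_pmf (\<pi> (h, x)) (\<lambda>a. map_pmf (Pair (h @ [(x, a)])) (K x a))) (\<lambda>(h, y). g y))"
    unfolding hist_dist.simps
    by (subst expectation_bind_pmf_finite[OF finite_set_hist_dist])
       (auto simp: set_bind_pmf case_prod_unfold)
  also have "\<dots> = measure_pmf.expectation (hist_dist \<pi> K q n)
           (\<lambda>(h, x). measure_pmf.expectation (\<pi> (h, x)) (\<lambda>a. measure_pmf.expectation (K x a) g))"
    by (intro Bochner_Integration.integral_cong refl) (auto simp: expectation_bind_pmf_finite)
  finally show ?thesis .
qed

definition expected_reward :: "(('q, 'a) hist \<Rightarrow> 'a pmf) \<Rightarrow> ('q \<Rightarrow> 'a \<Rightarrow> 'q pmf)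
                               \<Rightarrow> ('q \<Rightarrow> 'a \<Rightarrow> real) \<Rightarrow> 'q \<Rightarrow> nat \<Rightarrow> real" where
  "expected_reward \<pi> K rew q n = measure_pmf.expectation (hist_dist \<pi> K q n)
      (\<lambda>(h, x). measure_pmf.expectation (\<pi> (h, x)) (\<lambda>a. rew x a))"

lemma expected_reward_bellman:
  fixes \<pi> :: "('q::finite, 'a::finite) hist \<Rightarrow> 'a pmf" and W :: "'q \<Rightarrow> real"
  shows "expected_reward \<pi> K rew q n + \<gamma> * measure_pmf.expectation (hist_dist \<pi> K q (Suc n)) (\<lambda>(h, x). W x)
       = measure_pmf.expectation (hist_dist \<pi> K q n) (\<lambda>(h, x). measure_pmf.expectation (\<pi> (h, x))
           (\<lambda>a. rew x a + \<gamma> * measure_pmf.expectation (K x a) W))"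
  unfolding expected_reward_def expectation_hist_dist_Suc
  by (simp add: case_prod_unfold integral_add)

lemma discounted_telescope:
  fixes r w :: "nat \<Rightarrow> real"
  assumes "0 \<le> \<gamma>" and step: "\<And>n. r n + \<gamma> * w (Suc n) \<le> w n"
  shows "(\<Sum>k<n. \<gamma> ^ k * r k) + \<gamma> ^ n * w n \<le> w 0"
proof (induction n)
  case (Suc n)
  have "(\<Sum>k<Suc n. \<gamma> ^ k * r k) + \<gamma> ^ Suc n * w (Suc n)
      = (\<Sum>k<n. \<gamma> ^ k * r k) + \<gamma> ^ n * (r n + \<gamma> * w (Suc n))"
    by (simp add: algebra_simps)
  also have "\<dots> \<le> (\<Sum>k<n. \<gamma> ^ k * r k) + \<gamma> ^ n * w n"
    using step assms(1) by (simp add: mult_left_mono)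
  finally show ?case using Suc.IH by linarith
qed simp

lemma abs_expectation_le:
  fixes f :: "'b \<Rightarrow> real"
  assumes "\<And>x. \<bar>f x\<bar> \<le> B"
  shows "\<bar>measure_pmf.expectation p f\<bar> \<le> B"
proof -
  have f: "integrable (measure_pmf p) f"
    using assms by (auto intro!: measure_pmf.integrable_const_bound[where B = B] AE_pmfI)
  have "- B \<le> f x" "f x \<le> B" for x
    using assms[of x] by (auto simp: abs_le_iff)
  then have "- B \<le> measure_pmf.expectation p f" "measure_pmf.expectation p f \<le> B"
    by (auto intro!: measure_pmf.integral_ge_const measure_pmf.integral_le_const f AE_pmfI)
  then show ?thesis
    by (simp add: abs_le_iff)
qed

lemma disc_value_tendsto:
  fixes \<pi> :: "('q::finite, 'a::finite) hist \<Rightarrow> 'a pmf" and W :: "'q \<Rightarrow> real"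
  assumes "0 \<le> \<gamma>" "\<gamma> < 1"
  shows "(\<lambda>n. (\<Sum>k<n. \<gamma> ^ k * expected_reward \<pi> K rew q k)
             + \<gamma> ^ n * measure_pmf.expectation (hist_dist \<pi> K q n) (\<lambda>(h, x). W x))
         \<longlonglongrightarrow> disc_value \<pi> K rew \<gamma> q"
proof -
  define M where "M = Max (range (\<lambda>(x, a). \<bar>rew x a\<bar>))"
  define MW where "MW = Max (range (\<lambda>x. \<bar>W x\<bar>))"
  have "\<bar>rew x a\<bar> \<le> M" for x a
    unfolding M_def by (rule Max_ge) (auto intro: image_eqI[of _ _ "(x, a)"])
  then have reward_bound: "\<bar>expected_reward \<pi> K rew q k\<bar> \<le> M" for k
    unfolding expected_reward_def by (intro abs_expectation_le) (auto intro: abs_expectation_le)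
  have "summable (\<lambda>k. M * \<gamma> ^ k)"
    using assms by (intro summable_mult summable_geometric) auto
  moreover have "norm (\<gamma> ^ k * expected_reward \<pi> K rew q k) \<le> M * \<gamma> ^ k" for k
    using mult_left_mono[OF reward_bound[of k], of "\<gamma> ^ k"] assms by (simp add: abs_mult mult.commute)
  ultimately have "summable (\<lambda>k. \<gamma> ^ k * expected_reward \<pi> K rew q k)"
    by (rule summable_comparison_test')
  then have "(\<lambda>n. \<Sum>k<n. \<gamma> ^ k * expected_reward \<pi> K rew q k)
      \<longlonglongrightarrow> disc_value \<pi> K rew \<gamma> q"
    unfolding disc_value_def expected_reward_def[symmetric] by (rule summable_LIMSEQ)
  moreover have
    "(\<lambda>n. \<gamma> ^ n * measure_pmf.expectation (hist_dist \<pi> K q n) (\<lambda>(h, x). W x)) \<longlonglongrightarrow> 0"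
  proof (rule Lim_null_comparison)
    have "\<bar>W x\<bar> \<le> MW" for x
      unfolding MW_def by (rule Max_ge) auto
    then have "\<bar>measure_pmf.expectation (hist_dist \<pi> K q n) (\<lambda>(h, x). W x)\<bar> \<le> MW" for n
      by (intro abs_expectation_le) (simp add: case_prod_unfold)
    then show "\<forall>\<^sub>F n in sequentially.
        norm (\<gamma> ^ n * measure_pmf.expectation (hist_dist \<pi> K q n) (\<lambda>(h, x). W x)) \<le> \<gamma> ^ n * MW"
      using assms by (intro always_eventually allI) (simp add: abs_mult mult_left_mono)
    show "(\<lambda>n. \<gamma> ^ n * MW) \<longlonglongrightarrow> 0"
      using assms by (intro tendsto_mult_left_zero LIMSEQ_power_zero) auto
  qed
  ultimately show ?thesis
    using tendsto_add by fastforce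
qed

lemma disc_value_le_of_supersolution:
  fixes \<pi> :: "('q::finite, 'a::finite) hist \<Rightarrow> 'a pmf" and W :: "'q \<Rightarrow> real"
  assumes "0 \<le> \<gamma>" "\<gamma> < 1"
    and super: "\<And>x a. rew x a + \<gamma> * measure_pmf.expectation (K x a) W \<le> W x"
  shows "disc_value \<pi> K rew \<gamma> q \<le> W q"
proof -
  define w where "w n = measure_pmf.expectation (hist_dist \<pi> K q n) (\<lambda>(h, x). W x)" for n
  have "measure_pmf.expectation (\<pi> (h, x)) (\<lambda>a. rew x a + \<gamma> * measure_pmf.expectation (K x a) W) \<le> W x"
    for h x by (rule measure_pmf.integral_le_const) (auto intro: AE_pmfI super)
  then have "expected_reward \<pi> K rew q n + \<gamma> * w (Suc n) \<le> w n" for n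
    unfolding w_def expected_reward_bellman
    by (intro Bochner_Integration.integral_mono integrable_hist_dist) (simp only: case_prod_beta)
  from discounted_telescope[of \<gamma> "expected_reward \<pi> K rew q" w, OF assms(1) this]
  have "(\<Sum>k<n. \<gamma> ^ k * expected_reward \<pi> K rew q k) + \<gamma> ^ n * w n \<le> W q" for n
    by (simp add: w_def)
  with disc_value_tendsto[OF assms(1,2), of \<pi> K rew q W] show ?thesis
    unfolding w_def by (intro LIMSEQ_le_const2) auto
qed

lemma disc_value_ge_of_subsolution:
  fixes \<pi> :: "('q::finite, 'a::finite) hist \<Rightarrow> 'a pmf" and W :: "'q \<Rightarrow> real"
  assumes "0 \<le> \<gamma>" "\<gamma> < 1"
    and sub: "\<And>h x. W x \<le> measure_pmf.expectation (\<pi> (h, x))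
                              (\<lambda>a. rew x a + \<gamma> * measure_pmf.expectation (K x a) W)"
  shows "W q \<le> disc_value \<pi> K rew \<gamma> q"
proof -
  define w where "w n = measure_pmf.expectation (hist_dist \<pi> K q n) (\<lambda>(h, x). W x)" for n
  have "w n \<le> expected_reward \<pi> K rew q n + \<gamma> * w (Suc n)" for n
    unfolding w_def expected_reward_bellman
    by (intro Bochner_Integration.integral_mono integrable_hist_dist) (simp only: case_prod_beta sub)
  then have negated: "- expected_reward \<pi> K rew q n + \<gamma> * - w (Suc n) \<le> - w n" for n
    by (simp add: algebra_simps)
  have "W q \<le> (\<Sum>k<n. \<gamma> ^ k * expected_reward \<pi> K rew q k) + \<gamma> ^ n * w n" for n
    using discounted_telescope[of \<gamma> "\<lambda>n. - expected_reward \<pi> K rew q n" "\<lambda>n. - w n",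
        OF assms(1) negated, of n]
    by (simp add: w_def sum_negf)
  with disc_value_tendsto[OF assms(1,2), of \<pi> K rew q W] show ?thesis
    unfolding w_def by (intro LIMSEQ_le_const) auto
qed

lemma bdd_below_disc_value:
  fixes rew :: "'q::finite \<Rightarrow> 'a::finite \<Rightarrow> real"
  assumes "0 \<le> \<gamma>" "\<gamma> < 1"
  shows "bdd_below ((\<lambda>K. disc_value \<pi> K rew \<gamma> q) ` U)"
proof
  define M where "M = Max (range (\<lambda>(x, a). \<bar>rew x a\<bar>))"
  have "\<bar>rew x a\<bar> \<le> M" for x a
    unfolding M_def by (rule Max_ge) (auto intro: image_eqI[of _ _ "(x, a)"])
  then have "- M \<le> rew x a" for x a
    using abs_le_iff by (metis minus_le_iff)
  moreover have "- M / (1 - \<gamma>) = - M + \<gamma> * (- M / (1 - \<gamma>))"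
    using assms by (simp add: field_simps)
  ultimately have "- M / (1 - \<gamma>) \<le> rew x a + \<gamma> * (- M / (1 - \<gamma>))" for x a
    by (metis add_le_cancel_right)
  then have "- M / (1 - \<gamma>) \<le> disc_value \<pi> K rew \<gamma> q" for K
    by (intro disc_value_ge_of_subsolution[OF assms] measure_pmf.integral_ge_const) (auto intro: AE_pmfI)
  then show "\<And>v. v \<in> (\<lambda>K. disc_value \<pi> K rew \<gamma> q) ` U \<Longrightarrow> - M / (1 - \<gamma>) \<le> v"
    by blast
qed

lemma robust_opt_value_eqI:
  fixes rew :: "'q::finite \<Rightarrow> 'a::finite \<Rightarrow> real"
  assumes "0 \<le> \<gamma>" "\<gamma> < 1"
    and adversary: "\<And>\<pi> e. 0 < e \<Longrightarrow> \<exists>K\<in>U. disc_value \<pi> K rew \<gamma> q \<le> v + e"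
    and agent: "\<exists>\<pi>. \<forall>K\<in>U. v \<le> disc_value \<pi> K rew \<gamma> q"
  shows "robust_opt_value U rew \<gamma> q = v"
proof -
  have robust_le: "robust_value \<pi> U rew \<gamma> q \<le> v" for \<pi>
  proof (rule field_le_epsilon)
    fix e :: real assume "0 < e"
    then obtain K where "K \<in> U" "disc_value \<pi> K rew \<gamma> q \<le> v + e"
      using adversary by blast
    moreover have "robust_value \<pi> U rew \<gamma> q \<le> disc_value \<pi> K rew \<gamma> q"
      unfolding robust_value_def by (rule cINF_lower[OF bdd_below_disc_value[OF assms(1,2)] \<open>K \<in> U\<close>])
    ultimately show "robust_value \<pi> U rew \<gamma> q \<le> v + e"
      by linarith
  qed
  obtain \<pi> where "\<forall>K\<in>U. v \<le> disc_value \<pi> K rew \<gamma> q"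
    using agent by blast
  moreover have "U \<noteq> {}"
    using adversary[of 1] by auto
  ultimately have "v \<le> robust_value \<pi> U rew \<gamma> q"
    unfolding robust_value_def by (intro cINF_greatest) auto
  moreover have "bdd_above (range (\<lambda>\<pi>. robust_value \<pi> U rew \<gamma> q))"
    by (rule bdd_aboveI[of _ v]) (auto intro: robust_le)
  ultimately have "v \<le> robust_opt_value U rew \<gamma> q"
    unfolding robust_opt_value_def by (intro order_trans[OF _ cSUP_upper]) auto
  moreover have "robust_opt_value U rew \<gamma> q \<le> v"
    unfolding robust_opt_value_def by (intro cSUP_least robust_le) auto
  ultimately show ?thesis
    by simp
qed


section \<open>The bisimulation metric RMDP\<close>

lemma bisim_unc_couplings:
  "K \<in> bisim_unc P \<Longrightarrow> K q a \<in> couplings (P (fst q) a) (P (snd q) a)"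
  by (cases q) (simp add: bisim_unc_def)

lemma bisim_unc_near_optimal:
  fixes P :: "'s::finite \<Rightarrow> 'a \<Rightarrow> 's pmf" and d :: "'s \<Rightarrow> 's \<Rightarrow> real"
  assumes "0 < e"
  obtains K where "K \<in> bisim_unc P"
    and "\<And>q a. measure_pmf.expectation (K q a) (case_prod d)
                \<le> kantorovich d (P (fst q) a) (P (snd q) a) + e"
proof -
  have "\<exists>c. c \<in> couplings (P (fst q) a) (P (snd q) a) \<and>
            measure_pmf.expectation c (case_prod d) \<le> kantorovich d (P (fst q) a) (P (snd q) a) + e"
    for q a
    using kantorovich_approx[OF assms] by (meson less_imp_le)
  then obtain K where "\<And>q a. K q a \<in> couplings (P (fst q) a) (P (snd q) a) \<and>
      measure_pmf.expectation (K q a) (case_prod d) \<le> kantorovich d (P (fst q) a) (P (snd q) a) + e"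
    by metis
  then show thesis
    by (intro that[of K]) (auto simp: bisim_unc_def)
qed

lemma bisim_adversary_bound:
  fixes P :: "'s::finite \<Rightarrow> 'a::finite \<Rightarrow> 's pmf"
  assumes "0 \<le> \<gamma>" "\<gamma> < 1" and fixpoint: "FK P R \<gamma> d = d" and "0 < e"
  shows "\<exists>K\<in>bisim_unc P. disc_value \<pi> K (bisim_reward R \<gamma>) \<gamma> q \<le> case_prod d q + e"
proof -
  obtain K where K: "K \<in> bisim_unc P" and near: "\<And>q a. measure_pmf.expectation (K q a) (case_prod d)
      \<le> kantorovich d (P (fst q) a) (P (snd q) a) + (1 - \<gamma>) * e"
    using bisim_unc_near_optimal[of "(1 - \<gamma>) * e" P d] assms by auto
  \<comment> \<open>With (1 - \<gamma>) e-optimal couplings, d shifted up by \<gamma> e is a supersolution.\<close>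
  have "disc_value \<pi> K (bisim_reward R \<gamma>) \<gamma> q \<le> case_prod d q + \<gamma> * e"
  proof (rule disc_value_le_of_supersolution[OF assms(1,2)])
    fix q :: "'s \<times> 's" and a
    have "bisim_reward R \<gamma> q a + \<gamma> * measure_pmf.expectation (K q a) (\<lambda>q. case_prod d q + \<gamma> * e)
        = bisim_reward R \<gamma> q a + \<gamma> * measure_pmf.expectation (K q a) (case_prod d) + \<gamma> * (\<gamma> * e)"
      by (simp add: algebra_simps)
    also have "\<dots> \<le> bisim_reward R \<gamma> q a + \<gamma> * kantorovich d (P (fst q) a) (P (snd q) a) + \<gamma> * e"
      using mult_left_mono[OF near[of q a] assms(1)] by (simp add: algebra_simps)
    also have "\<dots> \<le> case_prod d q + \<gamma> * e"
      using FK_ge[of \<gamma> R "fst q" a "snd q" d P] unfolding fixpoint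
      by (simp add: bisim_reward_def case_prod_unfold)
    finally show "bisim_reward R \<gamma> q a + \<gamma> * measure_pmf.expectation (K q a) (\<lambda>q. case_prod d q + \<gamma> * e)
        \<le> case_prod d q + \<gamma> * e" .
  qed
  moreover have "\<gamma> * e \<le> e"
    using assms by (simp add: mult_left_le_one_le)
  ultimately show ?thesis
    using K by force
qed

lemma bisim_greedy_policy_bound:
  fixes P :: "'s::finite \<Rightarrow> 'a::finite \<Rightarrow> 's pmf"
  assumes "0 \<le> \<gamma>" "\<gamma> < 1" and fixpoint: "FK P R \<gamma> d = d"
  shows "\<exists>\<pi>. \<forall>K\<in>bisim_unc P. case_prod d q \<le> disc_value \<pi> K (bisim_reward R \<gamma>) \<gamma> q"
proof -
  have "\<exists>a. case_prod d q = bisim_reward R \<gamma> q a + \<gamma> * kantorovich d (P (fst q) a) (P (snd q) a)" for q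
    using FK_attained[of P R \<gamma> d "fst q" "snd q"] unfolding fixpoint
    by (simp add: bisim_reward_def case_prod_unfold)
  then obtain \<sigma> where \<sigma>: "\<And>q. case_prod d q
      = bisim_reward R \<gamma> q (\<sigma> q) + \<gamma> * kantorovich d (P (fst q) (\<sigma> q)) (P (snd q) (\<sigma> q))"
    by metis
  have "case_prod d q \<le> disc_value (\<lambda>(h, x). return_pmf (\<sigma> x)) K (bisim_reward R \<gamma>) \<gamma> q"
    if K: "K \<in> bisim_unc P" for K
  proof (rule disc_value_ge_of_subsolution[OF assms(1,2)])
    fix h and x :: "'s \<times> 's"
    have "kantorovich d (P (fst x) (\<sigma> x)) (P (snd x) (\<sigma> x))
        \<le> measure_pmf.expectation (K x (\<sigma> x)) (case_prod d)"
      by (rule kantorovich_le_expectation[OF bisim_unc_couplings[OF K]])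
    then show "case_prod d x \<le> measure_pmf.expectation ((\<lambda>(h, x). return_pmf (\<sigma> x)) (h, x))
        (\<lambda>a. bisim_reward R \<gamma> x a + \<gamma> * measure_pmf.expectation (K x a) (case_prod d))"
      using \<sigma>[of x] assms(1) by (simp add: mult_left_mono)
  qed
  then show ?thesis
    by blast
qed

lemma robust_opt_value_bisim:
  fixes P :: "'s::finite \<Rightarrow> 'a::finite \<Rightarrow> 's pmf"
  assumes "0 \<le> \<gamma>" "\<gamma> < 1" and "FK P R \<gamma> d = d"
  shows "robust_opt_value (bisim_unc P) (bisim_reward R \<gamma>) \<gamma> (s, s') = d s s'"
  using robust_opt_value_eqI[OF assms(1,2) bisim_adversary_bound[OF assms]
      bisim_greedy_policy_bound[OF assms]]
  by simp

theorem theorem19: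
  fixes P :: "'s::finite \<Rightarrow> 'a::finite \<Rightarrow> 's pmf"
    and R :: "'s \<Rightarrow> 'a \<Rightarrow> real"
    and \<gamma> :: real
    and s1 s2 :: 's
  assumes "0 < \<gamma>" and "\<gamma> < 1"
  shows "(\<forall>s s'. robust_opt_value (bisim_unc P) (bisim_reward R \<gamma>) \<gamma> (s, s')
                  = bisim_metric P R \<gamma> s s')
       \<and> robust_opt_value (bisim_unc P) (bisim_reward R \<gamma>) \<gamma> (s1, s2)
                  = bisim_metric P R \<gamma> s1 s2"
proof -
  have \<gamma>: "0 \<le> \<gamma>" "\<gamma> < 1"
    using assms by auto
  obtain d where "is_pseudometric d" and fixpoint: "FK P R \<gamma> d = d"
    using FK_has_pseudometric_fixpoint[OF \<gamma>] by blast
  then have "bisim_metric P R \<gamma> = d"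
    by (rule bisim_metric_eqI[OF \<gamma>])
  then show ?thesis
    using robust_opt_value_bisim[OF \<gamma> fixpoint] by simp
qed

end
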